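(* Let $\Gamma=(V,E)$ be a connected graph of valency at least $3$, $G\leqslant\mathrm{Aut}(\Gamma)$, and assume $\Gamma$ is $(G,2)$-arc-transitive. Let $G^*=\langle G_{\alpha_1},G_{\alpha_2}\rangle$ for some $\{\alpha_1,\alpha_2\}\in E$ and $M=\mathrm{soc}(G^* )$, and assume $G^*$ is a quasiprimitive group of PA type on each of its orbits on $V$, so that $M=T_1\times\cdots\times T_n$ is the unique minimal normal subgroup of $G^*$, with $n\geqslant2$ and the $T_i$ pairwise isomorphic nonabelian simple groups, and for each $\alpha\in V$ there are subgroups $R_i<T_i$ with $M_\alpha\leqslant R_1\times\cdots\times R_n$ such that every projection $\pi_i:M_\alpha\to R_i$ is surjective. For $1\leqslant i\leqslant n$ let $N_i=\prod_{j\ne i}T_j$. Then every $N_i$ is intransitive on each of the $M$-orbits on $V$.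
   Context: Graphs are finite, simple and undirected; $G_\alpha$ is a vertex stabilizer. A $2$-arc is a triple $(\alpha,\beta,\gamma)$ of distinct vertices with $\{\alpha,\beta\},\{\beta,\gamma\}\in E$, and $(G,2)$-arc-transitive means $G$ is transitive on $2$-arcs. A permutation group is quasiprimitive if each minimal normal subgroup is transitive. $\mathrm{soc}(X)$ is the subgroup generated by all minimal normal subgroups of $X$. *)

theory Defs
  imports "HOL-Algebra.Algebra"
begin

definition graph_aut :: "'v set \<Rightarrow> ('v \<Rightarrow> 'v \<Rightarrow> bool) \<Rightarrow> ('v \<Rightarrow> 'v) set" where
  "graph_aut V E = {g \<in> Bij V. \<forall>x\<in>V. \<forall>y\<in>V. E x y \<longleftrightarrow> E (g x) (g y)}"

definition finite_simple_graph :: "'v set \<Rightarrow> ('v \<Rightarrow> 'v \<Rightarrow> bool) \<Rightarrow> bool" where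
  "finite_simple_graph V E \<longleftrightarrow> finite V \<and> (\<forall>x y. E x y \<longrightarrow> x \<in> V \<and> y \<in> V)
     \<and> (\<forall>x y. E x y \<longrightarrow> E y x) \<and> (\<forall>x. \<not> E x x)"

definition connected_graph :: "'v set \<Rightarrow> ('v \<Rightarrow> 'v \<Rightarrow> bool) \<Rightarrow> bool" where
  "connected_graph V E \<longleftrightarrow> V \<noteq> {} \<and> (\<forall>x\<in>V. \<forall>y\<in>V. E\<^sup>*\<^sup>* x y)"

definition min_valency_ge :: "'v set \<Rightarrow> ('v \<Rightarrow> 'v \<Rightarrow> bool) \<Rightarrow> nat \<Rightarrow> bool" where
  "min_valency_ge V E k \<longleftrightarrow> (\<forall>v\<in>V. card {w. E v w} \<ge> k)"

definition two_arc :: "('v \<Rightarrow> 'v \<Rightarrow> bool) \<Rightarrow> 'v \<Rightarrow> 'v \<Rightarrow> 'v \<Rightarrow> bool" where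
  "two_arc E a b c \<longleftrightarrow> a \<noteq> b \<and> b \<noteq> c \<and> a \<noteq> c \<and> E a b \<and> E b c"

definition two_arc_transitive :: "('v \<Rightarrow> 'v \<Rightarrow> bool) \<Rightarrow> ('v \<Rightarrow> 'v) set \<Rightarrow> bool" where
  "two_arc_transitive E G \<longleftrightarrow>
     (\<forall>a b c a' b' c'. two_arc E a b c \<longrightarrow> two_arc E a' b' c' \<longrightarrow>
        (\<exists>g\<in>G. g a = a' \<and> g b = b' \<and> g c = c'))"

definition stab :: "('v \<Rightarrow> 'v) set \<Rightarrow> 'v \<Rightarrow> ('v \<Rightarrow> 'v) set" where
  "stab H a = {g \<in> H. g a = a}"

definition perm_orbit :: "('v \<Rightarrow> 'v) set \<Rightarrow> 'v \<Rightarrow> 'v set" where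
  "perm_orbit H a = (\<lambda>g. g a) ` H"

definition transitive_on :: "('v \<Rightarrow> 'v) set \<Rightarrow> 'v set \<Rightarrow> bool" where
  "transitive_on H D \<longleftrightarrow> (\<forall>x\<in>D. \<forall>y\<in>D. \<exists>g\<in>H. g x = y)"

abbreviation subgrp :: "'v set \<Rightarrow> ('v \<Rightarrow> 'v) set \<Rightarrow> ('v \<Rightarrow> 'v) monoid" where
  "subgrp V H \<equiv> (BijGroup V)\<lparr>carrier := H\<rparr>"

definition min_normal :: "'v set \<Rightarrow> ('v \<Rightarrow> 'v) set \<Rightarrow> ('v \<Rightarrow> 'v) set \<Rightarrow> bool" where
  "min_normal V H N \<longleftrightarrow> N \<lhd> subgrp V H \<and> N \<noteq> {\<one>\<^bsub>BijGroup V\<^esub>} \<and>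
     (\<forall>K. K \<lhd> subgrp V H \<longrightarrow> K \<subseteq> N \<longrightarrow> K \<noteq> {\<one>\<^bsub>BijGroup V\<^esub>} \<longrightarrow> K = N)"

definition socle :: "'v set \<Rightarrow> ('v \<Rightarrow> 'v) set \<Rightarrow> ('v \<Rightarrow> 'v) set" where
  "socle V H = generate (BijGroup V) (\<Union>{N. min_normal V H N})"

text \<open>Quasiprimitivity of the group induced by H on an H-invariant set D:
  every normal subgroup of H acting nontrivially on D is transitive on D
  (equivalently every minimal normal subgroup of the induced group is transitive).\<close>
definition quasiprimitive_on :: "'v set \<Rightarrow> ('v \<Rightarrow> 'v) set \<Rightarrow> 'v set \<Rightarrow> bool" where
  "quasiprimitive_on V H D \<longleftrightarrow> D \<noteq> {} \<and>
     (\<forall>N. N \<lhd> subgrp V H \<longrightarrow> (\<exists>g\<in>N. \<exists>x\<in>D. g x \<noteq> x) \<longrightarrow> transitive_on N D)"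

definition list_prod :: "'v set \<Rightarrow> (nat \<Rightarrow> ('v \<Rightarrow> 'v)) \<Rightarrow> nat \<Rightarrow> ('v \<Rightarrow> 'v)" where
  "list_prod V t n = foldr (\<lambda>i acc. t i \<otimes>\<^bsub>BijGroup V\<^esub> acc) [0..<n] \<one>\<^bsub>BijGroup V\<^esub>"

definition internal_dprod :: "'v set \<Rightarrow> ('v \<Rightarrow> 'v) set \<Rightarrow> (nat \<Rightarrow> ('v \<Rightarrow> 'v) set) \<Rightarrow> nat \<Rightarrow> bool" where
  "internal_dprod V M T n \<longleftrightarrow>
     (\<forall>i<n. subgroup (T i) (BijGroup V)) \<and>
     (\<forall>i<n. \<forall>j<n. i \<noteq> j \<longrightarrow> (\<forall>x\<in>T i. \<forall>y\<in>T j.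
         x \<otimes>\<^bsub>BijGroup V\<^esub> y = y \<otimes>\<^bsub>BijGroup V\<^esub> x)) \<and>
     M = {list_prod V t n | t. \<forall>i<n. t i \<in> T i} \<and>
     (\<forall>t s. (\<forall>i<n. t i \<in> T i) \<longrightarrow> (\<forall>i<n. s i \<in> T i) \<longrightarrow>
         list_prod V t n = list_prod V s n \<longrightarrow> (\<forall>i<n. t i = s i))"

definition nonabelian_simple :: "'v set \<Rightarrow> ('v \<Rightarrow> 'v) set \<Rightarrow> bool" where
  "nonabelian_simple V T \<longleftrightarrow> simple_group (subgrp V T) \<and>
     (\<exists>x\<in>T. \<exists>y\<in>T. x \<otimes>\<^bsub>BijGroup V\<^esub> y \<noteq> y \<otimes>\<^bsub>BijGroup V\<^esub> x)"

end

theory Submission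
  imports Defs
begin

(* If N_i were transitive on the M-orbit of \<alpha>, then for x \<in> T_i some g \<in> N_i would
   satisfy \<alpha>^g = \<alpha>^x, so g\<inverse>x lies in M_\<alpha>.  Every element of N_i has trivial
   T_i-coordinate, hence the T_i-coordinate of g\<inverse>x is x itself: the projection of M_\<alpha>
   onto T_i would be all of T_i, contradicting M_\<alpha> \<le> R_1 \<times> ... \<times> R_n with R_i < T_i. *)

lemma BijGroup_mult_apply:
  assumes "x \<in> carrier (BijGroup V)" "y \<in> carrier (BijGroup V)" "a \<in> V"
  shows "(x \<otimes>\<^bsub>BijGroup V\<^esub> y) a = x (y a)"
  using assms by (simp add: BijGroup_def compose_def)

lemma BijGroup_one_apply: "a \<in> V \<Longrightarrow> \<one>\<^bsub>BijGroup V\<^esub> a = a"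
  by (simp add: BijGroup_def)

definition (in monoid) ordered_prod :: "(nat \<Rightarrow> 'a) \<Rightarrow> nat \<Rightarrow> 'a" where
  "ordered_prod t n = foldr (\<lambda>i acc. t i \<otimes> acc) [0..<n] \<one>"

lemma list_prod_eq_ordered_prod: "list_prod V = monoid.ordered_prod (BijGroup V)"
  by (intro ext) (simp add: list_prod_def monoid.ordered_prod_def[OF group.is_monoid[OF group_BijGroup]])

context monoid
begin

lemma foldr_mult_closed:
  "\<forall>i\<in>set xs. t i \<in> carrier G \<Longrightarrow> a \<in> carrier G \<Longrightarrow> foldr (\<lambda>i acc. t i \<otimes> acc) xs a \<in> carrier G"
  by (induction xs) auto

lemma foldr_mult_acc:
  "\<forall>i\<in>set xs. t i \<in> carrier G \<Longrightarrow> a \<in> carrier G \<Longrightarrow>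
     foldr (\<lambda>i acc. t i \<otimes> acc) xs a = foldr (\<lambda>i acc. t i \<otimes> acc) xs \<one> \<otimes> a"
  by (induction xs) (auto simp: m_assoc foldr_mult_closed)

lemma ordered_prod_0 [simp]: "ordered_prod t 0 = \<one>"
  by (simp add: ordered_prod_def)

lemma ordered_prod_closed: "\<forall>i<n. t i \<in> carrier G \<Longrightarrow> ordered_prod t n \<in> carrier G"
  unfolding ordered_prod_def by (rule foldr_mult_closed) auto

lemma ordered_prod_Suc:
  assumes "\<forall>i\<le>n. t i \<in> carrier G"
  shows "ordered_prod t (Suc n) = ordered_prod t n \<otimes> t n"
  using assms foldr_mult_acc[of "[0..<n]" t "t n \<otimes> \<one>"] by (simp add: ordered_prod_def)

lemma ordered_prod_cong: "\<forall>i<n. s i = t i \<Longrightarrow> ordered_prod s n = ordered_prod t n"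
  unfolding ordered_prod_def by (intro foldr_cong) auto

lemma ordered_prod_one [simp]: "ordered_prod (\<lambda>_. \<one>) n = \<one>"
  by (induction n) (simp_all add: ordered_prod_Suc)

lemma ordered_prod_single:
  assumes "x \<in> carrier G"
  shows "ordered_prod (\<lambda>k. if k = j then x else \<one>) n = (if j < n then x else \<one>)"
  using assms by (induction n) (auto simp: ordered_prod_Suc)

end

locale commuting_factors = group G for G (structure) +
  fixes T :: "nat \<Rightarrow> 'a set" and n :: nat
  assumes factor_subgroup: "i < n \<Longrightarrow> subgroup (T i) G"
    and factors_commute: "\<lbrakk>i < n; j < n; i \<noteq> j; x \<in> T i; y \<in> T j\<rbrakk> \<Longrightarrow> x \<otimes> y = y \<otimes> x"
begin

lemma factor_carrier: "i < n \<Longrightarrow> x \<in> T i \<Longrightarrow> x \<in> carrier G"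
  by (rule subgroup.mem_carrier[OF factor_subgroup])

lemma factor_one: "i < n \<Longrightarrow> \<one> \<in> T i"
  by (rule subgroup.one_closed[OF factor_subgroup])

lemma factor_inv: "i < n \<Longrightarrow> x \<in> T i \<Longrightarrow> inv x \<in> T i"
  by (rule subgroup.m_inv_closed[OF factor_subgroup])

lemma factor_mult: "i < n \<Longrightarrow> x \<in> T i \<Longrightarrow> y \<in> T i \<Longrightarrow> x \<otimes> y \<in> T i"
  by (rule subgroup.m_closed[OF factor_subgroup])

lemma tuple_carrier: "\<forall>j<n. s j \<in> T j \<Longrightarrow> j < n \<Longrightarrow> s j \<in> carrier G"
  by (simp add: factor_carrier)

lemma tuple_prod_closed: "\<forall>j<n. s j \<in> T j \<Longrightarrow> m \<le> n \<Longrightarrow> ordered_prod s m \<in> carrier G"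
  by (rule ordered_prod_closed) (simp add: tuple_carrier)

lemma tuple_prod_Suc:
  "\<forall>j<n. s j \<in> T j \<Longrightarrow> m < n \<Longrightarrow> ordered_prod s (Suc m) = ordered_prod s m \<otimes> s m"
  by (rule ordered_prod_Suc) (simp add: tuple_carrier)

lemma factor_commutes_ordered_prod:
  assumes s: "\<forall>j<n. s j \<in> T j" and x: "x \<in> T k" "k < n"
  shows "m \<le> k \<Longrightarrow> x \<otimes> ordered_prod s m = ordered_prod s m \<otimes> x"
proof (induction m)
  case (Suc m)
  have m: "m < n" "m \<noteq> k" using Suc.prems x(2) by auto
  have carr: "x \<in> carrier G" "s m \<in> carrier G" "ordered_prod s m \<in> carrier G"
    using s x m factor_carrier tuple_carrier tuple_prod_closed by auto
  have comm: "x \<otimes> s m = s m \<otimes> x"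
    using factors_commute[OF x(2) m(1) m(2)[symmetric] x(1)] s m(1) by simp
  have "x \<otimes> ordered_prod s (Suc m) = (x \<otimes> ordered_prod s m) \<otimes> s m"
    using carr by (simp add: tuple_prod_Suc[OF s m(1)] m_assoc)
  also have "\<dots> = ordered_prod s m \<otimes> (x \<otimes> s m)"
    using Suc carr by (simp add: m_assoc)
  also have "\<dots> = ordered_prod s (Suc m) \<otimes> x"
    using carr comm by (simp add: tuple_prod_Suc[OF s m(1)] m_assoc)
  finally show ?case .
qed (use x factor_carrier in simp)

lemma ordered_prod_mult:
  assumes s: "\<forall>j<n. s j \<in> T j" and t: "\<forall>j<n. t j \<in> T j"
  shows "ordered_prod s n \<otimes> ordered_prod t n = ordered_prod (\<lambda>j. s j \<otimes> t j) n"
proof -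
  have st: "\<forall>j<n. s j \<otimes> t j \<in> T j"
    using s t factor_mult by blast
  have "ordered_prod s m \<otimes> ordered_prod t m = ordered_prod (\<lambda>j. s j \<otimes> t j) m" if "m \<le> n" for m
    using that
  proof (induction m)
    case (Suc m)
    then have m: "m < n" by simp
    have carr: "s m \<in> carrier G" "t m \<in> carrier G"
      "ordered_prod s m \<in> carrier G" "ordered_prod t m \<in> carrier G"
      using s t m tuple_carrier tuple_prod_closed by auto
    have comm: "s m \<otimes> ordered_prod t m = ordered_prod t m \<otimes> s m"
      using factor_commutes_ordered_prod[OF t, of "s m" m m] s m by simp
    have "ordered_prod s (Suc m) \<otimes> ordered_prod t (Suc m)
        = ordered_prod s m \<otimes> (s m \<otimes> ordered_prod t m) \<otimes> t m"
      using carr by (simp add: tuple_prod_Suc[OF s m] tuple_prod_Suc[OF t m] m_assoc)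
    also have "\<dots> = (ordered_prod s m \<otimes> ordered_prod t m) \<otimes> (s m \<otimes> t m)"
      using carr by (simp add: comm m_assoc)
    also have "\<dots> = ordered_prod (\<lambda>j. s j \<otimes> t j) (Suc m)"
      using Suc tuple_prod_Suc[OF st m] by simp
    finally show ?case .
  qed simp
  then show ?thesis by simp
qed

lemma ordered_prod_inv:
  assumes s: "\<forall>j<n. s j \<in> T j"
  shows "inv (ordered_prod s n) = ordered_prod (\<lambda>j. inv (s j)) n"
proof (rule inv_equality)
  have inv_s: "\<forall>j<n. inv (s j) \<in> T j"
    using s factor_inv by blast
  have "ordered_prod (\<lambda>j. inv (s j)) n \<otimes> ordered_prod s n = ordered_prod (\<lambda>j. inv (s j) \<otimes> s j) n"
    using ordered_prod_mult[OF inv_s s] .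
  also have "\<dots> = ordered_prod (\<lambda>_. \<one>) n"
    using s factor_carrier by (intro ordered_prod_cong) simp
  finally show "ordered_prod (\<lambda>j. inv (s j)) n \<otimes> ordered_prod s n = \<one>" by simp
  show "ordered_prod s n \<in> carrier G" "ordered_prod (\<lambda>j. inv (s j)) n \<in> carrier G"
    using tuple_prod_closed[OF s] tuple_prod_closed[OF inv_s] by simp_all
qed

lemma single_factor_tuple:
  assumes "j < n" "h \<in> T j"
  shows "\<forall>k<n. (if k = j then h else \<one>) \<in> T k"
    and "ordered_prod (\<lambda>k. if k = j then h else \<one>) n = h"
  using assms factor_one factor_carrier by (simp_all add: ordered_prod_single)

lemma generate_other_factors:
  assumes "g \<in> generate G (\<Union>j\<in>{0..<n} - {i}. T j)"
  shows "\<exists>s. (\<forall>j<n. s j \<in> T j) \<and> s i = \<one> \<and> g = ordered_prod s n"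
  using assms
proof (induction rule: generate.induct)
  case one
  have "\<forall>j<n. \<one> \<in> T j" using factor_one by blast
  then show ?case by (intro exI[of _ "\<lambda>_. \<one>"]) simp
next
  case (incl h)
  then obtain j where "j \<in> {0..<n} - {i}" "h \<in> T j" by blast
  then have j: "j < n" "j \<noteq> i" "h \<in> T j" by auto
  then show ?case
    using single_factor_tuple[OF j(1) j(3)] by (intro exI[of _ "\<lambda>k. if k = j then h else \<one>"]) simp
next
  case (inv h)
  then obtain j where "j \<in> {0..<n} - {i}" "h \<in> T j" by blast
  then have j: "j < n" "j \<noteq> i" "inv h \<in> T j" by (auto simp: factor_inv)
  then show ?case
    using single_factor_tuple[OF j(1) j(3)] by (intro exI[of _ "\<lambda>k. if k = j then inv h else \<one>"]) simp
next
  case (eng g h)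
  then obtain s t where s: "\<forall>j<n. s j \<in> T j" "s i = \<one>" "g = ordered_prod s n"
    and t: "\<forall>j<n. t j \<in> T j" "t i = \<one>" "h = ordered_prod t n" by blast
  then have "\<forall>j<n. s j \<otimes> t j \<in> T j" using factor_mult by blast
  with s t show ?case
    using ordered_prod_mult[OF s(1) t(1)] by (intro exI[of _ "\<lambda>j. s j \<otimes> t j"]) simp
qed

end

lemma internal_dprod_commuting_factors:
  "internal_dprod V M T n \<Longrightarrow> commuting_factors (BijGroup V) T n"
  unfolding internal_dprod_def commuting_factors_def commuting_factors_axioms_def
  using group_BijGroup by blast

lemma stab_proj_surj_if_complement_transitive:
  assumes dprod: "internal_dprod V M T n" and i: "i < n" and \<alpha>: "\<alpha> \<in> V"
    and trans: "transitive_on (generate (BijGroup V) (\<Union>j\<in>{0..<n} - {i}. T j)) (perm_orbit M \<alpha>)"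
    and x: "x \<in> T i"
  obtains u where "\<forall>j<n. u j \<in> T j" "list_prod V u n \<in> stab M \<alpha>" "u i = x"
proof -
  let ?B = "BijGroup V"
  interpret commuting_factors ?B T n
    using dprod by (rule internal_dprod_commuting_factors)
  have M: "M = {ordered_prod t n | t. \<forall>j<n. t j \<in> T j}"
    using dprod by (simp add: internal_dprod_def list_prod_eq_ordered_prod)
  have one_T: "\<forall>j<n. \<one>\<^bsub>?B\<^esub> \<in> T j"
    using factor_one by blast
  define e where "e = (\<lambda>k. if k = i then x else \<one>\<^bsub>?B\<^esub>)"
  have e: "\<forall>j<n. e j \<in> T j" "ordered_prod e n = x"
    unfolding e_def using single_factor_tuple[OF i x] .
  have "ordered_prod (\<lambda>_. \<one>\<^bsub>?B\<^esub>) n \<in> M" "ordered_prod e n \<in> M"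
    unfolding M using one_T e(1) by blast+
  then have "\<one>\<^bsub>?B\<^esub> \<in> M" "x \<in> M" using e(2) by simp_all
  then have "\<one>\<^bsub>?B\<^esub> \<alpha> \<in> perm_orbit M \<alpha>" "x \<alpha> \<in> perm_orbit M \<alpha>"
    unfolding perm_orbit_def by blast+
  then have "\<alpha> \<in> perm_orbit M \<alpha>" "x \<alpha> \<in> perm_orbit M \<alpha>"
    using BijGroup_one_apply[OF \<alpha>] by simp_all
  with trans obtain g where g: "g \<in> generate ?B (\<Union>j\<in>{0..<n} - {i}. T j)" and "g \<alpha> = x \<alpha>"
    unfolding transitive_on_def by blast
  obtain s where s: "\<forall>j<n. s j \<in> T j" "s i = \<one>\<^bsub>?B\<^esub>" "g = ordered_prod s n"
    using generate_other_factors[OF g] by blast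
  have carr: "g \<in> carrier ?B" "x \<in> carrier ?B"
    using tuple_prod_closed[OF s(1)] s(3) factor_carrier[OF i x] by simp_all
  define u where "u = (\<lambda>j. inv\<^bsub>?B\<^esub> s j \<otimes>\<^bsub>?B\<^esub> e j)"
  have inv_s: "\<forall>j<n. inv\<^bsub>?B\<^esub> s j \<in> T j"
    using s factor_inv by blast
  have u: "\<forall>j<n. u j \<in> T j" "u i = x"
    using inv_s e(1) s(2) carr(2) factor_mult by (simp_all add: u_def e_def)
  have u_prod: "ordered_prod u n = inv\<^bsub>?B\<^esub> g \<otimes>\<^bsub>?B\<^esub> x"
    using ordered_prod_mult[OF inv_s e(1)] ordered_prod_inv[OF s(1)] s(3) e(2) by (simp add: u_def)
  have "(inv\<^bsub>?B\<^esub> g \<otimes>\<^bsub>?B\<^esub> x) \<alpha> = (inv\<^bsub>?B\<^esub> g) (g \<alpha>)"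
    using carr \<alpha> \<open>g \<alpha> = x \<alpha>\<close> by (simp add: BijGroup_mult_apply)
  also have "\<dots> = \<alpha>"
    using carr \<alpha> BijGroup_mult_apply[of "inv\<^bsub>?B\<^esub> g" V g \<alpha>] by (simp add: BijGroup_one_apply)
  finally have "(inv\<^bsub>?B\<^esub> g \<otimes>\<^bsub>?B\<^esub> x) \<alpha> = \<alpha>" .
  moreover have "ordered_prod u n \<in> M"
    unfolding M using u(1) by blast
  ultimately have "list_prod V u n \<in> stab M \<alpha>"
    unfolding stab_def list_prod_eq_ordered_prod using u_prod by simp
  then show ?thesis by (rule that[OF u(1) _ u(2)])
qed

theorem lemma4p1:
  fixes V :: "'v set" and E :: "'v \<Rightarrow> 'v \<Rightarrow> bool" and G :: "('v \<Rightarrow> 'v) set"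
    and a1 a2 :: 'v and M :: "('v \<Rightarrow> 'v) set"
    and T :: "nat \<Rightarrow> ('v \<Rightarrow> 'v) set" and n :: nat
  defines "Gs \<equiv> generate (BijGroup V) (stab G a1 \<union> stab G a2)"
  assumes graph: "finite_simple_graph V E"
    and conn: "connected_graph V E"
    and val: "min_valency_ge V E 3"
    and G_sub: "subgroup G (BijGroup V)" and G_aut: "G \<subseteq> graph_aut V E"
    and two_at: "two_arc_transitive E G"
    and edge: "E a1 a2"
    and M_soc: "M = socle V Gs"
    and qp: "\<forall>\<alpha>\<in>V. quasiprimitive_on V Gs (perm_orbit Gs \<alpha>)"
    and M_unique: "{N. min_normal V Gs N} = {M}"
    and n_ge: "n \<ge> 2"
    and dprod: "internal_dprod V M T n"
    and T_simple: "\<forall>i<n. nonabelian_simple V (T i)"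
    and T_iso: "\<forall>i<n. \<forall>j<n. subgrp V (T i) \<cong> subgrp V (T j)"
    and proj: "\<forall>\<alpha>\<in>V. \<exists>R :: nat \<Rightarrow> ('v \<Rightarrow> 'v) set.
        (\<forall>i<n. subgroup (R i) (BijGroup V) \<and> R i \<subset> T i) \<and>
        (\<forall>t. (\<forall>i<n. t i \<in> T i) \<longrightarrow> list_prod V t n \<in> stab M \<alpha> \<longrightarrow> (\<forall>i<n. t i \<in> R i)) \<and>
        (\<forall>i<n. \<forall>r\<in>R i. \<exists>t. (\<forall>j<n. t j \<in> T j) \<and> list_prod V t n \<in> stab M \<alpha> \<and> t i = r)"
  shows "\<forall>i<n. \<forall>\<alpha>\<in>V.
           \<not> transitive_on (generate (BijGroup V) (\<Union>j\<in>{0..<n} - {i}. T j)) (perm_orbit M \<alpha>)"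
proof (intro allI impI ballI notI)
  fix i \<alpha>
  assume i: "i < n" and \<alpha>: "\<alpha> \<in> V"
    and trans: "transitive_on (generate (BijGroup V) (\<Union>j\<in>{0..<n} - {i}. T j)) (perm_orbit M \<alpha>)"
  obtain R where R_proper: "\<forall>i<n. subgroup (R i) (BijGroup V) \<and> R i \<subset> T i"
    and stab_in_R: "\<forall>t. (\<forall>i<n. t i \<in> T i) \<longrightarrow> list_prod V t n \<in> stab M \<alpha> \<longrightarrow> (\<forall>i<n. t i \<in> R i)"
    using bspec[OF proj \<alpha>] by blast
  obtain x where x: "x \<in> T i" "x \<notin> R i"
    using R_proper i psubset_imp_ex_mem by (metis DiffE)
  obtain u where "\<forall>j<n. u j \<in> T j" "list_prod V u n \<in> stab M \<alpha>" "u i = x"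
    using stab_proj_surj_if_complement_transitive[OF dprod i \<alpha> trans x(1)] .
  with stab_in_R i x(2) show False by auto
qed

end
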